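(* Fix $d,m\geq1$ and smooth vector fields $f^0,\dots,f^m$ on $\mathbb{R}^d$. For all exotic forests $\pi_d$, $\hat\pi_{\hat d}$ and all $\phi\in\mathcal{C}^\infty_P(\mathbb{R}^d)$, \[ F^{\mathrm{exo}}(\pi_d)\big[F^{\mathrm{exo}}(\hat\pi_{\hat d})[\phi]\big]=F^{\mathrm{exo}}(\pi_d\diamond\hat\pi_{\hat d})[\phi], \] where $F^{\mathrm{exo}}$ is extended linearly.
   Context: A forest $\pi=(V,E)$: finite node set, directed edges $(v,w)$ ($v$ a predecessor of $w$), each node with at most one outgoing edge, each connected component with exactly one root (node without outgoing edge); $\mathbf{1}$ is the empty forest. A decoration $d:V\to\mathbb{N}$ has $|d^{-1}(n)|\in\{0,2\}$ for $n>0$ in the exotic case (a pair of nodes with the same nonzero decoration is a liana); exotic forests are equivalence classes of such decorated graphs under edge-preserving node bijections that map decorations to decorations differing only by a relabelling of nonzero values (bijection of $\mathbb{N}$ fixing $0$). $F^{\mathrm{exo}}(\pi_d)[\phi](x)=\sum_{i_w\in\{1,\dots,d\},\,w\in V}\sum_{p_n\in\{1,\dots,m\},\,n\in d(V)\setminus\{0\}}\phi_{I_R}(x)\prod_{v\in V}f^{p_{d(v)},i_v}_{I_{\Pi(v)}}(x)$ with $p_0=0$, $R$ the roots, $\Pi(v)$ the predecessors of $v$, $\phi_{I_S}$ the partial derivative of $\phi$ in the indices $i_w,w\in S$, $f^{p,i}_{j_1\dots j_k}$ partial derivatives of the $i$-th component of $f^p$; $F^{\mathrm{exo}}(\mathbf{1})[\phi]=\phi$.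 The Grossman–Larson product $\pi_d\diamond\hat\pi_{\hat d}$ is the sum, over all maps $g$ from the set of roots of $\pi$ to $\hat V\cup\{\ast\}$, of the forest on $V\sqcup\hat V$ with edges $E\cup\hat E\cup\{(r,g(r)):g(r)\neq\ast\}$ and decoration equal to $d$ on $V$ and $\hat d$ on $\hat V$ after relabelling so that nonzero decorations of $\pi$ and $\hat\pi$ are distinct. $\mathcal{C}^\infty_P(\mathbb{R}^d)$: smooth functions with all derivatives polynomially bounded. *)

theory Defs
  imports "HOL-Analysis.Analysis"
begin

definition partial :: "'d::finite \<Rightarrow> (real^'d \<Rightarrow> real) \<Rightarrow> real^'d \<Rightarrow> real" where
  "partial i g x = deriv (\<lambda>t. g (x + t *\<^sub>R axis i 1)) 0"

fun partials :: "(real^'d::finite \<Rightarrow> real) \<Rightarrow> 'd list \<Rightarrow> real^'d \<Rightarrow> real" where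
  "partials g [] = g"
| "partials g (i # is) = partial i (partials g is)"

text \<open>Partial derivative in a multiset of directions (order irrelevant for smooth g).\<close>
definition pdm :: "(real^'d::finite \<Rightarrow> real) \<Rightarrow> 'd multiset \<Rightarrow> real^'d \<Rightarrow> real" where
  "pdm g M = partials g (SOME xs. mset xs = M)"

definition smooth :: "(real^'d::finite \<Rightarrow> real) \<Rightarrow> bool" where
  "smooth g \<longleftrightarrow> (\<forall>is. partials g is differentiable_on UNIV)"

definition smooth_poly :: "(real^'d::finite \<Rightarrow> real) \<Rightarrow> bool" where
  "smooth_poly g \<longleftrightarrow> smooth g \<and>
     (\<forall>is. \<exists>C (k::nat). \<forall>x. \<bar>partials g is x\<bar> \<le> C * (1 + norm x) ^ k)"

record 'a forest =
  nodes  :: "'a set"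
  parent :: "'a \<Rightarrow> 'a option"   \<comment> \<open>target of the unique outgoing edge, if any\<close>
  deco   :: "'a \<Rightarrow> nat"

definition edges :: "'a forest \<Rightarrow> ('a \<times> 'a) set" where
  "edges \<pi> = {(v, w). v \<in> nodes \<pi> \<and> parent \<pi> v = Some w}"

definition roots :: "'a forest \<Rightarrow> 'a set" where
  "roots \<pi> = {v \<in> nodes \<pi>. parent \<pi> v = None}"

definition preds :: "'a forest \<Rightarrow> 'a \<Rightarrow> 'a set" where
  "preds \<pi> v = {u \<in> nodes \<pi>. parent \<pi> u = Some v}"

text \<open>A finite forest: each node has at most one outgoing edge (built in), edges stay in
  the node set, and there are no cycles (so each component has exactly one root).\<close>
definition forest :: "'a forest \<Rightarrow> bool" where
  "forest \<pi> \<longleftrightarrow> finite (nodes \<pi>)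
     \<and> (\<forall>v w. parent \<pi> v = Some w \<longrightarrow> v \<in> nodes \<pi> \<and> w \<in> nodes \<pi>)
     \<and> acyclic (edges \<pi>)"

definition exotic_forest :: "'a forest \<Rightarrow> bool" where
  "exotic_forest \<pi> \<longleftrightarrow> forest \<pi> \<and>
     (\<forall>n>0. card {v \<in> nodes \<pi>. deco \<pi> v = n} \<in> {0, 2})"

definition lianas :: "'a forest \<Rightarrow> nat set" where
  "lianas \<pi> = deco \<pi> ` nodes \<pi> - {0}"

text \<open>f p is the vector field f^p; its i-th component is (\<lambda>x. f p x $ i).\<close>
definition Fexo :: "(nat \<Rightarrow> real^'d \<Rightarrow> real^'d) \<Rightarrow> nat \<Rightarrow> 'a forest
                    \<Rightarrow> (real^'d::finite \<Rightarrow> real) \<Rightarrow> real^'d \<Rightarrow> real" where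
  "Fexo f m \<pi> \<phi> x =
    (\<Sum>i \<in> nodes \<pi> \<rightarrow>\<^sub>E (UNIV :: 'd set).
      \<Sum>p \<in> lianas \<pi> \<rightarrow>\<^sub>E {1..m}.
        pdm \<phi> (image_mset i (mset_set (roots \<pi>))) x *
        (\<Prod>v \<in> nodes \<pi>.
           pdm (\<lambda>y. f (if deco \<pi> v = 0 then 0 else p (deco \<pi> v)) y $ i v)
               (image_mset i (mset_set (preds \<pi> v))) x))"

text \<open>Grafting maps: each root of \<pi> goes to a node of \<pi>' (Some w) or to * (None).\<close>
definition GL_maps :: "'a forest \<Rightarrow> 'b forest \<Rightarrow> ('a \<Rightarrow> 'b option) set" where
  "GL_maps \<pi> \<pi>' = roots \<pi> \<rightarrow>\<^sub>E insert None (Some ` nodes \<pi>')"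

text \<open>The forest on the disjoint union; nonzero decorations are relabelled injectively
  (evens for \<pi>, odds for \<pi>') so that those of \<pi> and \<pi>' are distinct.\<close>
definition graft :: "'a forest \<Rightarrow> 'b forest \<Rightarrow> ('a \<Rightarrow> 'b option) \<Rightarrow> ('a + 'b) forest" where
  "graft \<pi> \<pi>' g =
    \<lparr> nodes = nodes \<pi> <+> nodes \<pi>',
      parent = (\<lambda>u. case u of
                  Inl v \<Rightarrow> (if v \<in> nodes \<pi> then
                              (case parent \<pi> v of Some w \<Rightarrow> Some (Inl w)
                                                | None \<Rightarrow> map_option Inr (g v))
                            else None)
                | Inr w \<Rightarrow> map_option Inr (parent \<pi>' w)),
      deco = (\<lambda>u. case u of
                  Inl v \<Rightarrow> (if deco \<pi> v = 0 then 0 else 2 * deco \<pi> v)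
                | Inr w \<Rightarrow> (if deco \<pi>' w = 0 then 0 else 2 * deco \<pi>' w + 1)) \<rparr>"

end

theory Submission
  imports Defs
begin

text \<open>Each term of F(\<pi>)[\<psi>] differentiates \<psi> once along every root of \<pi>. For
  \<psi> = F(\<pi>')[\<phi>] the Leibniz rule distributes these derivatives over the factors of each
  term of \<psi>, i.e. over \<phi> and the vector fields at the nodes of \<pi>'. Such a distribution is
  precisely a grafting map g from the roots of \<pi> to the nodes of \<pi>' and *, and the
  resulting term is a term of F of the forest grafted along g, because index and liana
  assignments of the grafted forest are exactly pairs of assignments of \<pi> and \<pi>'.
  Schwarz's theorem makes the order of differentiation immaterial, so that derivatives along
  multisets of directions are well defined.\<close>

section \<open>Partial derivatives and Schwarz's theorem\<close>

lemma has_real_derivative_along_axis: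
  fixes g :: "real^'d::finite \<Rightarrow> real"
  assumes "(g has_derivative g') (at (y + s *\<^sub>R axis i 1))"
  shows "((\<lambda>t. g (y + t *\<^sub>R axis i 1)) has_real_derivative g' (axis i 1)) (at s)"
proof -
  have "((\<lambda>t. y + t *\<^sub>R axis i 1) has_derivative (\<lambda>t. t *\<^sub>R axis i 1)) (at s)"
    by (auto intro!: derivative_eq_intros)
  from has_derivative_compose[OF this assms]
  have "((\<lambda>t. g (y + t *\<^sub>R axis i 1)) has_derivative (\<lambda>t. g' (t *\<^sub>R axis i 1))) (at s)" .
  moreover have "g' (t *\<^sub>R axis i 1) = g' (axis i 1) * t" for t
    using linear_cmul[OF has_derivative_linear[OF assms]] by simp
  ultimately show ?thesis
    by (simp add: has_field_derivative_def mult.commute[of _ "g' (axis i 1)"])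
qed

lemma partial_eq_derivative:
  fixes g :: "real^'d::finite \<Rightarrow> real"
  assumes "(g has_derivative g') (at x)"
  shows "partial i g x = g' (axis i 1)"
  using has_real_derivative_along_axis[of g g' x 0 i] assms
  unfolding partial_def by (simp add: DERIV_imp_deriv)

lemma has_real_derivative_partial:
  fixes g :: "real^'d::finite \<Rightarrow> real"
  assumes "g differentiable (at (y + s *\<^sub>R axis i 1))"
  shows "((\<lambda>t. g (y + t *\<^sub>R axis i 1)) has_real_derivative partial i g (y + s *\<^sub>R axis i 1)) (at s)"
proof -
  obtain g' where "(g has_derivative g') (at (y + s *\<^sub>R axis i 1))"
    using assms unfolding differentiable_def by blast
  then show ?thesis
    using has_real_derivative_along_axis partial_eq_derivative by metis
qed

lemma partial_const [simp]: "partial i (\<lambda>y. c) x = 0"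
  unfolding partial_def by simp

lemma partial_add:
  fixes g h :: "real^'d::finite \<Rightarrow> real"
  assumes "g differentiable (at x)" "h differentiable (at x)"
  shows "partial i (\<lambda>y. g y + h y) x = partial i g x + partial i h x"
proof -
  obtain g' h' where g': "(g has_derivative g') (at x)" and h': "(h has_derivative h') (at x)"
    using assms unfolding differentiable_def by blast
  then have "((\<lambda>y. g y + h y) has_derivative (\<lambda>v. g' v + h' v)) (at x)"
    by (rule has_derivative_add)
  then show ?thesis
    using g' h' by (simp only: partial_eq_derivative)
qed

lemma partial_mult:
  fixes g h :: "real^'d::finite \<Rightarrow> real"
  assumes "g differentiable (at x)" "h differentiable (at x)"
  shows "partial i (\<lambda>y. g y * h y) x = partial i g x * h x + g x * partial i h x"
proof -
  obtain g' h' where g': "(g has_derivative g') (at x)" and h': "(h has_derivative h') (at x)"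
    using assms unfolding differentiable_def by blast
  have "((\<lambda>y. g y * h y) has_derivative (\<lambda>v. g x * h' v + g' v * h x)) (at x)"
    using g' h' by (rule has_derivative_mult)
  then show ?thesis
    using g' h' by (simp only: partial_eq_derivative add.commute)
qed

lemma partial_sum:
  fixes G :: "'a \<Rightarrow> real^'d::finite \<Rightarrow> real"
  assumes "\<And>a. a \<in> A \<Longrightarrow> G a differentiable (at x)"
  shows "partial i (\<lambda>y. \<Sum>a\<in>A. G a y) x = (\<Sum>a\<in>A. partial i (G a) x)"
proof -
  obtain G' where G': "\<And>a. a \<in> A \<Longrightarrow> (G a has_derivative G' a) (at x)"
    using assms unfolding differentiable_def by metis
  then have "((\<lambda>y. \<Sum>a\<in>A. G a y) has_derivative (\<lambda>v. \<Sum>a\<in>A. G' a v)) (at x)"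
    by (rule has_derivative_sum)
  moreover have "partial i (G a) x = G' a (axis i 1)" if "a \<in> A" for a
    using G'[OF that] by (rule partial_eq_derivative)
  ultimately show ?thesis
    by (simp add: partial_eq_derivative)
qed

lemma partial_prod:
  fixes G :: "'a \<Rightarrow> real^'d::finite \<Rightarrow> real"
  assumes "\<And>a. a \<in> A \<Longrightarrow> G a differentiable (at x)"
  shows "partial i (\<lambda>y. \<Prod>a\<in>A. G a y) x = (\<Sum>a\<in>A. partial i (G a) x * (\<Prod>b\<in>A-{a}. G b x))"
proof -
  obtain G' where G': "\<And>a. a \<in> A \<Longrightarrow> (G a has_derivative G' a) (at x)"
    using assms unfolding differentiable_def by metis
  then have "((\<lambda>y. \<Prod>a\<in>A. G a y) has_derivative (\<lambda>v. \<Sum>a\<in>A. G' a v * (\<Prod>b\<in>A-{a}. G b x))) (at x)"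
    by (rule has_derivative_prod)
  moreover have "partial i (G a) x = G' a (axis i 1)" if "a \<in> A" for a
    using G'[OF that] by (rule partial_eq_derivative)
  ultimately show ?thesis
    by (simp add: partial_eq_derivative)
qed

lemma partials_append: "partials g (is @ js) = partials (partials g js) is"
  by (induction "is") auto

lemma smooth_iff_differentiable: "smooth g \<longleftrightarrow> (\<forall>is z. partials g is differentiable (at z))"
  unfolding smooth_def differentiable_on_def by simp

lemma smooth_partials_differentiable: "smooth g \<Longrightarrow> partials g is differentiable (at z)"
  by (simp add: smooth_iff_differentiable)

lemma smooth_differentiable: "smooth g \<Longrightarrow> g differentiable (at z)"
  using smooth_partials_differentiable[of g "[]"] by simp

lemma smooth_partials: "smooth g \<Longrightarrow> smooth (partials g is)"
  unfolding smooth_def by (metis partials_append)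

lemma mixed_difference_mvt:
  fixes h :: "real^'d::finite \<Rightarrow> real"
  assumes h: "smooth h" and t: "t > 0"
  obtains \<xi> \<eta> where "0 < \<xi>" "\<xi> < t" "0 < \<eta>" "\<eta> < t"
    "h (x + t *\<^sub>R axis a 1 + t *\<^sub>R axis b 1) - h (x + t *\<^sub>R axis a 1) - h (x + t *\<^sub>R axis b 1) + h x
       = t * t * partial b (partial a h) (x + \<xi> *\<^sub>R axis a 1 + \<eta> *\<^sub>R axis b 1)"
proof -
  define ea eb where "ea = axis a (1::real)" and "eb = axis b (1::real)"
  define \<phi> where "\<phi> s = h (x + t *\<^sub>R eb + s *\<^sub>R ea) - h (x + s *\<^sub>R ea)" for s
  have \<phi>': "(\<phi> has_real_derivative partial a h (x + t *\<^sub>R eb + s *\<^sub>R ea) - partial a h (x + s *\<^sub>R ea)) (at s)" for s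
    unfolding \<phi>_def ea_def
    by (intro DERIV_diff has_real_derivative_partial smooth_differentiable[OF h])
  then obtain \<xi> where \<xi>: "0 < \<xi>" "\<xi> < t"
    and \<phi>_diff: "\<phi> t - \<phi> 0 = t * (partial a h (x + t *\<^sub>R eb + \<xi> *\<^sub>R ea) - partial a h (x + \<xi> *\<^sub>R ea))"
    using MVT2[OF t, of \<phi>, OF \<phi>'] by auto
  define \<psi> where "\<psi> s = partial a h (x + \<xi> *\<^sub>R ea + s *\<^sub>R eb)" for s
  have \<psi>': "(\<psi> has_real_derivative partial b (partial a h) (x + \<xi> *\<^sub>R ea + s *\<^sub>R eb)) (at s)" for s
    unfolding \<psi>_def eb_def
    by (rule has_real_derivative_partial) (use smooth_partials_differentiable[OF h, of "[a]"] in simp)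
  then obtain \<eta> where \<eta>: "0 < \<eta>" "\<eta> < t"
    and \<psi>_diff: "\<psi> t - \<psi> 0 = t * partial b (partial a h) (x + \<xi> *\<^sub>R ea + \<eta> *\<^sub>R eb)"
    using MVT2[OF t, of \<psi>, OF \<psi>'] by auto
  have "\<phi> t - \<phi> 0 = t * (\<psi> t - \<psi> 0)"
    unfolding \<phi>_diff \<psi>_def by (simp add: algebra_simps)
  moreover have "\<phi> t - \<phi> 0 = h (x + t *\<^sub>R ea + t *\<^sub>R eb) - h (x + t *\<^sub>R ea) - h (x + t *\<^sub>R eb) + h x"
    unfolding \<phi>_def by (simp add: algebra_simps)
  ultimately show ?thesis
    using that \<xi> \<eta> \<psi>_diff unfolding ea_def eb_def by (metis mult.assoc)
qed

text \<open>Schwarz's theorem: the mixed second difference at scale t is t^2 times either mixed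
  partial at some point within distance 2t of x; let t = 1/(n+1) tend to 0.\<close>
lemma partial_commute:
  fixes h :: "real^'d::finite \<Rightarrow> real"
  assumes h: "smooth h"
  shows "partial a (partial b h) = partial b (partial a h)"
proof
  fix x :: "real^'d"
  define A B where "A = partial b (partial a h)" and "B = partial a (partial b h)"
  have near: "dist (x + u *\<^sub>R axis c 1 + v *\<^sub>R axis c' 1) x \<le> 2 * t"
    if "0 < u" "u < t" "0 < v" "v < t" for u v t c c'
  proof -
    have "dist (x + u *\<^sub>R axis c 1 + v *\<^sub>R axis c' 1) x = norm (u *\<^sub>R axis c (1::real) + v *\<^sub>R axis c' 1)"
      by (simp add: dist_norm)
    also have "\<dots> \<le> u + v"
      using norm_triangle_ineq[of "u *\<^sub>R axis c (1::real)" "v *\<^sub>R axis c' 1"] that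
      by (simp add: norm_axis_1)
    finally show ?thesis
      using that by simp
  qed
  have "\<exists>p q. dist p x \<le> 2 / real (Suc n) \<and> dist q x \<le> 2 / real (Suc n) \<and> A p = B q" for n
  proof -
    define t where "t = 1 / real (Suc n)"
    have t: "t > 0" by (simp add: t_def)
    obtain \<xi> \<eta> where a: "0 < \<xi>" "\<xi> < t" "0 < \<eta>" "\<eta> < t"
      "h (x + t *\<^sub>R axis a 1 + t *\<^sub>R axis b 1) - h (x + t *\<^sub>R axis a 1) - h (x + t *\<^sub>R axis b 1) + h x
         = t * t * A (x + \<xi> *\<^sub>R axis a 1 + \<eta> *\<^sub>R axis b 1)"
      using mixed_difference_mvt[OF h t] unfolding A_def by metis
    obtain \<xi>' \<eta>' where b: "0 < \<xi>'" "\<xi>' < t" "0 < \<eta>'" "\<eta>' < t"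
      "h (x + t *\<^sub>R axis b 1 + t *\<^sub>R axis a 1) - h (x + t *\<^sub>R axis b 1) - h (x + t *\<^sub>R axis a 1) + h x
         = t * t * B (x + \<xi>' *\<^sub>R axis b 1 + \<eta>' *\<^sub>R axis a 1)"
      using mixed_difference_mvt[OF h t] unfolding B_def by metis
    have "t * t * A (x + \<xi> *\<^sub>R axis a 1 + \<eta> *\<^sub>R axis b 1) = t * t * B (x + \<xi>' *\<^sub>R axis b 1 + \<eta>' *\<^sub>R axis a 1)"
      using a(5) b(5) by (simp add: algebra_simps)
    then show ?thesis
      using t near[OF a(1-4), of a b] near[OF b(1-4), of b a] unfolding t_def by auto
  qed
  then obtain p q where pq: "\<And>n. dist (p n) x \<le> 2 / real (Suc n)" "\<And>n. dist (q n) x \<le> 2 / real (Suc n)"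
    and eq: "\<And>n. A (p n) = B (q n)"
    by metis
  have null: "(\<lambda>n. 2 / real (Suc n)) \<longlonglongrightarrow> 0"
    using tendsto_mult_right_zero[OF LIMSEQ_inverse_real_of_nat, of 2] by (simp add: divide_inverse)
  have to_x: "r \<longlonglongrightarrow> x" if "\<And>n. dist (r n) x \<le> 2 / real (Suc n)" for r
    by (rule tendsto_dist_iff[THEN iffD2], rule Lim_null_comparison[OF _ null])
      (use that in \<open>simp add: always_eventually\<close>)
  have "isCont A x" "isCont B x"
    unfolding A_def B_def
    using smooth_partials_differentiable[OF h, of "[b, a]" x] smooth_partials_differentiable[OF h, of "[a, b]" x]
    by (simp_all add: differentiable_imp_continuous_within)
  then have "(\<lambda>n. A (p n)) \<longlonglongrightarrow> A x" "(\<lambda>n. B (q n)) \<longlonglongrightarrow> B x"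
    using to_x pq by (simp_all add: isCont_tendsto_compose)
  then show "B x = A x"
    unfolding eq using LIMSEQ_unique by metis
qed

lemma partials_perm:
  assumes g: "smooth g" and "mset is = mset js"
  shows "partials g is = partials g js"
  using assms(2)
proof (induction "is" arbitrary: js)
  case Nil
  then show ?case by simp
next
  case (Cons a "is")
  then obtain us vs where js: "js = us @ a # vs"
    by (metis list.set_intros(1) set_mset_mset split_list)
  have move_front: "partials g (us @ a # vs) = partials g (a # us @ vs)"
  proof (induction us)
    case (Cons u us)
    then show ?case
      using partial_commute[OF smooth_partials[OF g, of "us @ vs"]] by simp
  qed simp
  have "partials g is = partials g (us @ vs)"
    using Cons js by simp
  then show ?case
    using js move_front by simp
qed

section \<open>Derivatives along multisets of directions\<close>

lemma pdm_empty [simp]: "pdm g {#} = g"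
  unfolding pdm_def by simp

lemma pdm_mset: "smooth g \<Longrightarrow> pdm g (mset is) = partials g is"
  unfolding pdm_def by (rule partials_perm) (auto intro: someI_ex ex_mset)

lemma smooth_pdm: "smooth g \<Longrightarrow> smooth (pdm g M)"
  unfolding pdm_def by (rule smooth_partials)

lemma pdm_add:
  assumes g: "smooth g"
  shows "pdm g (M + N) = pdm (pdm g N) M"
proof -
  obtain "is" js where M: "M = mset is" and N: "N = mset js"
    by (metis ex_mset)
  then show ?thesis
    using pdm_mset[OF g, of "is @ js"] pdm_mset[OF g, of js] pdm_mset[OF smooth_partials[OF g, of js], of "is"]
    by (simp add: partials_append)
qed

lemma pdm_add_mset:
  assumes "smooth g"
  shows "pdm g (add_mset a M) = partial a (pdm g M)"
  using pdm_add[OF assms, of "{#a#}" M] pdm_mset[OF smooth_pdm[OF assms, of M], of "[a]"] by simp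

lemma partials_add:
  fixes g h :: "real^'d::finite \<Rightarrow> real"
  assumes "\<And>js z. length js < length is \<Longrightarrow> partials g js differentiable (at z)"
    and "\<And>js z. length js < length is \<Longrightarrow> partials h js differentiable (at z)"
  shows "partials (\<lambda>y. g y + h y) is = (\<lambda>y. partials g is y + partials h is y)"
  using assms
proof (induction "is")
  case (Cons i "is")
  then show ?case
    by (simp add: partial_add)
qed simp

lemma partials_sum:
  fixes G :: "'a \<Rightarrow> real^'d::finite \<Rightarrow> real"
  assumes "\<And>a. a \<in> A \<Longrightarrow> smooth (G a)"
  shows "partials (\<lambda>y. \<Sum>a\<in>A. G a y) is = (\<lambda>y. \<Sum>a\<in>A. partials (G a) is y)"
  by (induction "is") (simp_all add: partial_sum smooth_partials_differentiable assms)

lemma pdm_sum: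
  fixes G :: "'a \<Rightarrow> real^'d::finite \<Rightarrow> real"
  assumes "\<And>a. a \<in> A \<Longrightarrow> smooth (G a)"
  shows "pdm (\<lambda>y. \<Sum>a\<in>A. G a y) M = (\<lambda>y. \<Sum>a\<in>A. pdm (G a) M y)"
  unfolding pdm_def by (simp add: partials_sum assms)

lemma smooth_const: "smooth (\<lambda>y::real^'d::finite. c)"
proof -
  have "partials (\<lambda>y::real^'d. c) is = (\<lambda>y. if is = [] then c else 0)" for "is"
    by (induction "is") auto
  then show ?thesis
    unfolding smooth_iff_differentiable by simp
qed

lemma smooth_sum:
  fixes G :: "'a \<Rightarrow> real^'d::finite \<Rightarrow> real"
  assumes "\<And>a. a \<in> A \<Longrightarrow> smooth (G a)"
  shows "smooth (\<lambda>y. \<Sum>a\<in>A. G a y)"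
proof (cases "finite A")
  case True
  then show ?thesis
    unfolding smooth_iff_differentiable
    by (simp add: partials_sum assms differentiable_sum smooth_partials_differentiable)
qed (simp add: smooth_const)

text \<open>Induction on the order of the derivative: a derivative of a product is a sum of
  products of smooth functions, whose derivatives of lower order are already known to exist.\<close>
lemma smooth_mult:
  fixes g h :: "real^'d::finite \<Rightarrow> real"
  assumes "smooth g" "smooth h"
  shows "smooth (\<lambda>y. g y * h y)"
proof -
  have product_differentiable: "partials (\<lambda>y. g y * h y) is differentiable (at z)"
    if "smooth g" "smooth h" for "is" g h z
    using that
  proof (induction "length is" arbitrary: "is" g h z rule: less_induct)
    case less
    show ?case
    proof (cases "is" rule: rev_cases)
      case Nil
      then show ?thesis
        using less.prems by (simp add: differentiable_mult smooth_differentiable)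
    next
      case (snoc js i)
      have smooth_factors: "smooth (partial i g)" "smooth (partial i h)"
        using less.prems smooth_partials[of _ "[i]"] by simp_all
      have "partial i (\<lambda>y. g y * h y) = (\<lambda>y. partial i g y * h y + g y * partial i h y)"
        using less.prems by (simp add: fun_eq_iff partial_mult smooth_differentiable)
      moreover have "partials (\<lambda>y. partial i g y * h y + g y * partial i h y) js
          = (\<lambda>y. partials (\<lambda>y. partial i g y * h y) js y + partials (\<lambda>y. g y * partial i h y) js y)"
        using snoc less smooth_factors by (intro partials_add) simp_all
      ultimately show ?thesis
        using snoc less smooth_factors by (simp add: partials_append)
    qed
  qed
  show ?thesis
    using product_differentiable[OF assms] by (simp add: smooth_iff_differentiable)
qed

lemma smooth_prod:
  fixes G :: "'a \<Rightarrow> real^'d::finite \<Rightarrow> real"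
  assumes "\<And>a. a \<in> A \<Longrightarrow> smooth (G a)"
  shows "smooth (\<lambda>y. \<Prod>a\<in>A. G a y)"
  using assms
proof (induction A rule: infinite_finite_induct)
  case (insert a A)
  then show ?case
    by (simp add: smooth_mult)
qed (simp_all add: smooth_const)

section \<open>The Leibniz rule\<close>

lemma sum_PiE_insert:
  assumes "a \<notin> R"
  shows "(\<Sum>h\<in>insert a R \<rightarrow>\<^sub>E S. F h) = (\<Sum>w\<in>S. \<Sum>g\<in>R \<rightarrow>\<^sub>E S. F (g(a := w)))"
proof -
  have "(\<Sum>h\<in>insert a R \<rightarrow>\<^sub>E S. F h) = (\<Sum>(w, g)\<in>S \<times> (R \<rightarrow>\<^sub>E S). F (g(a := w)))"
    unfolding PiE_insert_eq by (subst sum.reindex[OF inj_combinator[OF assms]]) (simp add: case_prod_unfold)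
  then show ?thesis
    by (simp add: sum.cartesian_product)
qed

definition glue :: "('a \<Rightarrow> 'c) \<Rightarrow> 'a set \<Rightarrow> ('b \<Rightarrow> 'c) \<Rightarrow> 'b set \<Rightarrow> ('a \<Rightarrow> 'v) \<Rightarrow> ('b \<Rightarrow> 'v) \<Rightarrow> 'c \<Rightarrow> 'v"
  where "glue l A r B a b c =
    (if c \<in> l ` A then a (inv_into A l c) else if c \<in> r ` B then b (inv_into B r c) else undefined)"

lemma glue_left [simp]: "inj_on l A \<Longrightarrow> x \<in> A \<Longrightarrow> glue l A r B a b (l x) = a x"
  unfolding glue_def by simp

lemma glue_right [simp]:
  "inj_on r B \<Longrightarrow> l ` A \<inter> r ` B = {} \<Longrightarrow> y \<in> B \<Longrightarrow> glue l A r B a b (r y) = b y"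
  unfolding glue_def by auto

lemma sum_PiE_glue:
  assumes l: "inj_on l A" and r: "inj_on r B" and disj: "l ` A \<inter> r ` B = {}"
  shows "(\<Sum>h\<in>(l ` A \<union> r ` B) \<rightarrow>\<^sub>E V. F h) = (\<Sum>a\<in>A \<rightarrow>\<^sub>E V. \<Sum>b\<in>B \<rightarrow>\<^sub>E V. F (glue l A r B a b))"
proof -
  have glue_restrict: "glue l A r B (restrict (h \<circ> l) A) (restrict (h \<circ> r) B) = h"
    if h: "h \<in> (l ` A \<union> r ` B) \<rightarrow>\<^sub>E V" for h
  proof
    fix c
    consider x where "x \<in> A" "c = l x" | y where "y \<in> B" "c = r y" | "c \<notin> l ` A \<union> r ` B"
      by blast
    then show "glue l A r B (restrict (h \<circ> l) A) (restrict (h \<circ> r) B) c = h c"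
    proof cases
      case 1
      then show ?thesis by (simp add: l)
    next
      case 2
      then show ?thesis by (simp add: r disj)
    next
      case 3
      then show ?thesis by (simp add: glue_def PiE_arb[OF h])
    qed
  qed
  have "(\<Sum>h\<in>(l ` A \<union> r ` B) \<rightarrow>\<^sub>E V. F h) = (\<Sum>(a, b)\<in>(A \<rightarrow>\<^sub>E V) \<times> (B \<rightarrow>\<^sub>E V). F (glue l A r B a b))"
  proof (rule sum.reindex_bij_witness[where i = "\<lambda>(a, b). glue l A r B a b"
        and j = "\<lambda>h. (restrict (h \<circ> l) A, restrict (h \<circ> r) B)"])
    fix h assume h: "h \<in> (l ` A \<union> r ` B) \<rightarrow>\<^sub>E V"
    then show "(case (restrict (h \<circ> l) A, restrict (h \<circ> r) B) of (a, b) \<Rightarrow> glue l A r B a b) = h"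
      by (simp add: glue_restrict)
    show "(restrict (h \<circ> l) A, restrict (h \<circ> r) B) \<in> (A \<rightarrow>\<^sub>E V) \<times> (B \<rightarrow>\<^sub>E V)"
      using h by auto
  next
    fix ab assume "ab \<in> (A \<rightarrow>\<^sub>E V) \<times> (B \<rightarrow>\<^sub>E V)"
    then obtain a b where ab: "ab = (a, b)" and a: "a \<in> A \<rightarrow>\<^sub>E V" and b: "b \<in> B \<rightarrow>\<^sub>E V"
      by auto
    have "restrict (glue l A r B a b \<circ> l) A = a"
      using l PiE_arb[OF a] by (auto simp: fun_eq_iff)
    moreover have "restrict (glue l A r B a b \<circ> r) B = b"
      using r disj PiE_arb[OF b] by (auto simp: fun_eq_iff)
    ultimately show "(restrict ((case ab of (a, b) \<Rightarrow> glue l A r B a b) \<circ> l) A,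
                restrict ((case ab of (a, b) \<Rightarrow> glue l A r B a b) \<circ> r) B) = ab"
      by (simp add: ab)
    have "glue l A r B a b \<in> (l ` A \<union> r ` B) \<rightarrow>\<^sub>E V"
    proof (rule PiE_I)
      fix c assume "c \<in> l ` A \<union> r ` B"
      then show "glue l A r B a b c \<in> V"
        using a b l r disj by auto
    qed (simp add: glue_def)
    then show "(case ab of (a, b) \<Rightarrow> glue l A r B a b) \<in> (l ` A \<union> r ` B) \<rightarrow>\<^sub>E V"
      by (simp add: ab)
  qed (simp add: glue_restrict)
  then show ?thesis
    by (simp add: sum.cartesian_product)
qed

lemma prod_insert_None_Some:
  "finite A \<Longrightarrow> (\<Prod>q\<in>insert None (Some ` A). h q) = h None * (\<Prod>a\<in>A. h (Some a))"
  by (simp add: prod.reindex)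

abbreviation dirs :: "('a \<Rightarrow> 'd) \<Rightarrow> 'a set \<Rightarrow> 'd multiset" where
  "dirs i A \<equiv> image_mset i (mset_set A)"

lemma dirs_cong: "(\<And>x. x \<in> A \<Longrightarrow> i x = j x) \<Longrightarrow> dirs i A = dirs j A"
  by (cases "finite A") (auto intro: image_mset_cong)

lemma dirs_image: "inj_on e A \<Longrightarrow> dirs I (e ` A) = dirs (\<lambda>a. I (e a)) A"
  by (simp add: image_mset_mset_set[symmetric] image_mset.compositionality comp_def)

lemma dirs_Inl_Inr:
  assumes "finite A" "finite B"
  shows "dirs I (Inl ` A \<union> Inr ` B) = dirs (\<lambda>a. I (Inl a)) A + dirs (\<lambda>b. I (Inr b)) B"
  using assms by (subst mset_set_Union) (auto simp: dirs_image)

lemma dirs_fiber_update: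
  assumes "finite R" "a \<notin> R"
  shows "dirs i {r \<in> insert a R. (g(a := w)) r = q}
    = (if q = w then add_mset (i a) (dirs i {r \<in> R. g r = q}) else dirs i {r \<in> R. g r = q})"
proof -
  have "{r \<in> insert a R. (g(a := w)) r = q} = (if q = w then insert a {r \<in> R. g r = q} else {r \<in> R. g r = q})"
    using assms by auto
  then show ?thesis
    using assms by simp
qed

lemma prod_pdm_fiber_update:
  assumes R: "finite R" "a \<notin> R" and S: "finite S" "w \<in> S" and H: "smooth (H w)"
  shows "(\<Prod>q\<in>S. pdm (H q) (dirs i {r \<in> insert a R. (g(a := w)) r = q}) x)
    = partial (i a) (pdm (H w) (dirs i {r \<in> R. g r = w})) x * (\<Prod>q\<in>S - {w}. pdm (H q) (dirs i {r \<in> R. g r = q}) x)"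
proof -
  have "(\<Prod>q\<in>S. pdm (H q) (dirs i {r \<in> insert a R. (g(a := w)) r = q}) x)
      = (\<Prod>q\<in>S. pdm (H q) (if q = w then add_mset (i a) (dirs i {r \<in> R. g r = q})
                                else dirs i {r \<in> R. g r = q}) x)"
    by (simp only: dirs_fiber_update[OF R])
  also have "\<dots> = pdm (H w) (add_mset (i a) (dirs i {r \<in> R. g r = w})) x
      * (\<Prod>q\<in>S - {w}. pdm (H q) (dirs i {r \<in> R. g r = q}) x)"
    unfolding prod.remove[OF S] by (intro arg_cong2[where f = "(*)"] prod.cong) auto
  finally show ?thesis
    using H by (simp add: pdm_add_mset)
qed

text \<open>General Leibniz rule: g distributes the directions of R among the factors.\<close>
lemma pdm_prod:
  fixes H :: "'q \<Rightarrow> real^'d::finite \<Rightarrow> real" and i :: "'r \<Rightarrow> 'd"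
  assumes R: "finite R" and S: "finite S" and H: "\<And>q. q \<in> S \<Longrightarrow> smooth (H q)"
  shows "pdm (\<lambda>y. \<Prod>q\<in>S. H q y) (dirs i R)
    = (\<lambda>y. \<Sum>g\<in>R \<rightarrow>\<^sub>E S. \<Prod>q\<in>S. pdm (H q) (dirs i {r \<in> R. g r = q}) y)"
  using R
proof (induction R rule: finite_induct)
  case (insert a R)
  define G where "G g q = pdm (H q) (dirs i {r \<in> R. g r = q})" for g q
  have G: "smooth (G g q)" if "q \<in> S" for g q
    unfolding G_def using H[OF that] by (rule smooth_pdm)
  have step: "(\<Prod>q\<in>S. pdm (H q) (dirs i {r \<in> insert a R. (g(a := w)) r = q}) x)
      = partial (i a) (G g w) x * (\<Prod>q\<in>S - {w}. G g q x)" if "w \<in> S" for g w x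
    unfolding G_def using prod_pdm_fiber_update[where H = H, OF insert.hyps S that H[OF that]] .
  show ?case
  proof
    fix x
    have "pdm (\<lambda>y. \<Prod>q\<in>S. H q y) (dirs i (insert a R)) x
        = partial (i a) (\<lambda>y. \<Sum>g\<in>R \<rightarrow>\<^sub>E S. \<Prod>q\<in>S. G g q y) x"
      using insert by (simp add: pdm_add_mset smooth_prod H G_def)
    also have "\<dots> = (\<Sum>g\<in>R \<rightarrow>\<^sub>E S. \<Sum>w\<in>S. partial (i a) (G g w) x * (\<Prod>q\<in>S - {w}. G g q x))"
      using G by (simp add: partial_sum partial_prod smooth_prod smooth_differentiable)
    also have "\<dots> = (\<Sum>w\<in>S. \<Sum>g\<in>R \<rightarrow>\<^sub>E S.
        \<Prod>q\<in>S. pdm (H q) (dirs i {r \<in> insert a R. (g(a := w)) r = q}) x)"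
      by (subst sum.swap) (simp only: step cong: sum.cong)
    also have "\<dots> = (\<Sum>g\<in>insert a R \<rightarrow>\<^sub>E S. \<Prod>q\<in>S. pdm (H q) (dirs i {r \<in> insert a R. g r = q}) x)"
      using insert.hyps by (simp add: sum_PiE_insert)
    finally show "pdm (\<lambda>y. \<Prod>q\<in>S. H q y) (dirs i (insert a R)) x
        = (\<Sum>g\<in>insert a R \<rightarrow>\<^sub>E S. \<Prod>q\<in>S. pdm (H q) (dirs i {r \<in> insert a R. g r = q}) x)" .
  qed
qed simp

section \<open>Grafting\<close>

lemma finite_roots: "finite (nodes \<pi>) \<Longrightarrow> finite (roots \<pi>)"
  unfolding roots_def by simp

lemma nodes_graft [simp]: "nodes (graft \<pi> \<pi>' g) = nodes \<pi> <+> nodes \<pi>'"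
  by (simp add: graft_def)

lemma deco_graft [simp]:
  "deco (graft \<pi> \<pi>' g) (Inl v) = (if deco \<pi> v = 0 then 0 else 2 * deco \<pi> v)"
  "deco (graft \<pi> \<pi>' g) (Inr w) = (if deco \<pi>' w = 0 then 0 else 2 * deco \<pi>' w + 1)"
  by (simp_all add: graft_def)

lemma parent_graft [simp]:
  "parent (graft \<pi> \<pi>' g) (Inl v) = (if v \<notin> nodes \<pi> then None else
     case parent \<pi> v of Some w \<Rightarrow> Some (Inl w) | None \<Rightarrow> map_option Inr (g v))"
  "parent (graft \<pi> \<pi>' g) (Inr w) = map_option Inr (parent \<pi>' w)"
  by (simp_all add: graft_def)

lemma roots_graft: "roots (graft \<pi> \<pi>' g) = Inl ` {r \<in> roots \<pi>. g r = None} \<union> Inr ` roots \<pi>'"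
proof (intro set_eqI)
  fix u
  show "u \<in> roots (graft \<pi> \<pi>' g) \<longleftrightarrow> u \<in> Inl ` {r \<in> roots \<pi>. g r = None} \<union> Inr ` roots \<pi>'"
    by (cases u) (auto simp: roots_def split: option.splits)
qed

lemma preds_graft_Inl: "preds (graft \<pi> \<pi>' g) (Inl v) = Inl ` preds \<pi> v"
proof (intro set_eqI)
  fix u
  show "u \<in> preds (graft \<pi> \<pi>' g) (Inl v) \<longleftrightarrow> u \<in> Inl ` preds \<pi> v"
    by (cases u) (auto simp: preds_def split: option.splits)
qed

lemma preds_graft_Inr:
  "preds (graft \<pi> \<pi>' g) (Inr w) = Inl ` {r \<in> roots \<pi>. g r = Some w} \<union> Inr ` preds \<pi>' w"
proof (intro set_eqI)
  fix u
  show "u \<in> preds (graft \<pi> \<pi>' g) (Inr w) \<longleftrightarrow> u \<in> Inl ` {r \<in> roots \<pi>. g r = Some w} \<union> Inr ` preds \<pi>' w"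
    by (cases u) (auto simp: preds_def roots_def split: option.splits)
qed

lemma lianas_graft:
  "lianas (graft \<pi> \<pi>' g) = (\<lambda>k. 2 * k) ` lianas \<pi> \<union> (\<lambda>k. 2 * k + 1) ` lianas \<pi>'"
  by (force simp: lianas_def)

definition node_field :: "(nat \<Rightarrow> real^'d \<Rightarrow> real^'d) \<Rightarrow> 'a forest \<Rightarrow> (nat \<Rightarrow> nat) \<Rightarrow> ('a \<Rightarrow> 'd)
    \<Rightarrow> 'a \<Rightarrow> real^'d::finite \<Rightarrow> real"
  where "node_field f \<pi> p i v = (\<lambda>y. f (if deco \<pi> v = 0 then 0 else p (deco \<pi> v)) y $ i v)"

definition node_factor :: "(nat \<Rightarrow> real^'d \<Rightarrow> real^'d) \<Rightarrow> 'a forest \<Rightarrow> (nat \<Rightarrow> nat) \<Rightarrow> ('a \<Rightarrow> 'd)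
    \<Rightarrow> real^'d::finite \<Rightarrow> real"
  where "node_factor f \<pi> p i x = (\<Prod>v\<in>nodes \<pi>. pdm (node_field f \<pi> p i v) (dirs i (preds \<pi> v)) x)"

lemma Fexo_eq_node_factor:
  "Fexo f m \<pi> \<phi> x = (\<Sum>i\<in>nodes \<pi> \<rightarrow>\<^sub>E UNIV. \<Sum>p\<in>lianas \<pi> \<rightarrow>\<^sub>E {1..m}.
     pdm \<phi> (dirs i (roots \<pi>)) x * node_factor f \<pi> p i x)"
  unfolding Fexo_def node_factor_def node_field_def ..

lemma smooth_node_field:
  assumes f: "\<forall>q \<le> m. \<forall>j. smooth (\<lambda>x. f q x $ j)"
    and p: "p \<in> lianas \<pi> \<rightarrow>\<^sub>E {1..m}" and v: "v \<in> nodes \<pi>"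
  shows "smooth (node_field f \<pi> p i v)"
proof (cases "deco \<pi> v = 0")
  case False
  then have "deco \<pi> v \<in> lianas \<pi>"
    using v unfolding lianas_def by auto
  then have "p (deco \<pi> v) \<le> m"
    using p by auto
  then show ?thesis
    unfolding node_field_def using f False by simp
qed (simp add: node_field_def f)

text \<open>The part living on the nodes of \<pi>' of a term of F of the forest grafting the roots R
  of \<pi> (with directions i) along g: roots sent to * (None) differentiate \<phi>, those sent to w
  differentiate the field at w.\<close>
definition grafted_term :: "(nat \<Rightarrow> real^'d \<Rightarrow> real^'d) \<Rightarrow> 'b forest \<Rightarrow> (real^'d \<Rightarrow> real) \<Rightarrow> 'a set
    \<Rightarrow> ('a \<Rightarrow> 'd) \<Rightarrow> ('b \<Rightarrow> 'd) \<Rightarrow> (nat \<Rightarrow> nat) \<Rightarrow> ('a \<Rightarrow> 'b option) \<Rightarrow> real^'d::finite \<Rightarrow> real"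
  where "grafted_term f \<pi>' \<phi> R i i' p' g x =
    pdm \<phi> (dirs i {r \<in> R. g r = None} + dirs i' (roots \<pi>')) x *
    (\<Prod>w\<in>nodes \<pi>'. pdm (node_field f \<pi>' p' i' w) (dirs i {r \<in> R. g r = Some w} + dirs i' (preds \<pi>' w)) x)"

lemma pdm_Fexo:
  fixes f :: "nat \<Rightarrow> real^'d::finite \<Rightarrow> real^'d" and \<pi>' :: "'b forest" and i :: "'a \<Rightarrow> 'd"
  assumes f: "\<forall>q \<le> m. \<forall>j. smooth (\<lambda>x. f q x $ j)" and \<phi>: "smooth \<phi>"
    and N': "finite (nodes \<pi>')" and R: "finite R"
  shows "pdm (Fexo f m \<pi>' \<phi>) (dirs i R) x =
    (\<Sum>i'\<in>nodes \<pi>' \<rightarrow>\<^sub>E UNIV. \<Sum>p'\<in>lianas \<pi>' \<rightarrow>\<^sub>E {1..m}.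
       \<Sum>g\<in>R \<rightarrow>\<^sub>E insert None (Some ` nodes \<pi>'). grafted_term f \<pi>' \<phi> R i i' p' g x)"
proof -
  define S where "S = insert None (Some ` nodes \<pi>')"
  define H where "H i' p' q = (case q of None \<Rightarrow> pdm \<phi> (dirs i' (roots \<pi>'))
       | Some w \<Rightarrow> pdm (node_field f \<pi>' p' i' w) (dirs i' (preds \<pi>' w)))" for i' p' q
  have S: "finite S"
    unfolding S_def using N' by simp
  have H: "smooth (H i' p' q)" if "p' \<in> lianas \<pi>' \<rightarrow>\<^sub>E {1..m}" "q \<in> S" for i' p' q
  proof (cases q)
    case (Some w)
    then have "w \<in> nodes \<pi>'"
      using that(2) unfolding S_def by auto
    then show ?thesis
      unfolding H_def Some using smooth_node_field[OF f that(1)] by (simp add: smooth_pdm)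
  qed (simp add: H_def smooth_pdm \<phi>)
  have "Fexo f m \<pi>' \<phi> = (\<lambda>y. \<Sum>i'\<in>nodes \<pi>' \<rightarrow>\<^sub>E UNIV. \<Sum>p'\<in>lianas \<pi>' \<rightarrow>\<^sub>E {1..m}. \<Prod>q\<in>S. H i' p' q y)"
    unfolding Fexo_eq_node_factor node_factor_def S_def prod_insert_None_Some[OF N'] H_def by simp
  then have "pdm (Fexo f m \<pi>' \<phi>) (dirs i R) x = (\<Sum>i'\<in>nodes \<pi>' \<rightarrow>\<^sub>E UNIV. \<Sum>p'\<in>lianas \<pi>' \<rightarrow>\<^sub>E {1..m}.
      pdm (\<lambda>y. \<Prod>q\<in>S. H i' p' q y) (dirs i R) x)"
    using H by (simp add: pdm_sum smooth_sum smooth_prod)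
  also have "\<dots> = (\<Sum>i'\<in>nodes \<pi>' \<rightarrow>\<^sub>E UNIV. \<Sum>p'\<in>lianas \<pi>' \<rightarrow>\<^sub>E {1..m}. \<Sum>g\<in>R \<rightarrow>\<^sub>E S.
      \<Prod>q\<in>S. pdm (H i' p' q) (dirs i {r \<in> R. g r = q}) x)"
    using H by (simp add: pdm_prod[OF R S])
  also have "\<dots> = (\<Sum>i'\<in>nodes \<pi>' \<rightarrow>\<^sub>E UNIV. \<Sum>p'\<in>lianas \<pi>' \<rightarrow>\<^sub>E {1..m}. \<Sum>g\<in>R \<rightarrow>\<^sub>E S.
      grafted_term f \<pi>' \<phi> R i i' p' g x)"
  proof (intro sum.cong refl)
    fix i' p' g assume p': "p' \<in> lianas \<pi>' \<rightarrow>\<^sub>E {1..m}"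
    show "(\<Prod>q\<in>S. pdm (H i' p' q) (dirs i {r \<in> R. g r = q}) x) = grafted_term f \<pi>' \<phi> R i i' p' g x"
      unfolding S_def prod_insert_None_Some[OF N'] grafted_term_def H_def
      using \<phi> smooth_node_field[OF f p'] by (simp add: pdm_add)
  qed
  finally show ?thesis
    unfolding S_def .
qed

lemma dirs_roots_graft:
  assumes "finite (nodes \<pi>)" "finite (nodes \<pi>')"
    and "\<And>v. v \<in> nodes \<pi> \<Longrightarrow> I (Inl v) = i v" "\<And>w. w \<in> nodes \<pi>' \<Longrightarrow> I (Inr w) = i' w"
  shows "dirs I (roots (graft \<pi> \<pi>' g)) = dirs i {r \<in> roots \<pi>. g r = None} + dirs i' (roots \<pi>')"
  unfolding roots_graft using assms
  by (simp add: dirs_Inl_Inr roots_def) (intro arg_cong2[where f = "(+)"] dirs_cong; simp)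

lemma dirs_preds_graft_Inl:
  assumes "\<And>v. v \<in> nodes \<pi> \<Longrightarrow> I (Inl v) = i v"
  shows "dirs I (preds (graft \<pi> \<pi>' g) (Inl v)) = dirs i (preds \<pi> v)"
  unfolding preds_graft_Inl by (simp add: dirs_image) (intro dirs_cong, simp add: preds_def assms)

lemma dirs_preds_graft_Inr:
  assumes "finite (nodes \<pi>)" "finite (nodes \<pi>')"
    and "\<And>v. v \<in> nodes \<pi> \<Longrightarrow> I (Inl v) = i v" "\<And>w. w \<in> nodes \<pi>' \<Longrightarrow> I (Inr w) = i' w"
  shows "dirs I (preds (graft \<pi> \<pi>' g) (Inr w)) = dirs i {r \<in> roots \<pi>. g r = Some w} + dirs i' (preds \<pi>' w)"
  unfolding preds_graft_Inr using assms
  by (simp add: dirs_Inl_Inr roots_def preds_def) (intro arg_cong2[where f = "(+)"] dirs_cong; simp)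

lemma node_field_graft_Inl:
  assumes "\<And>v. v \<in> nodes \<pi> \<Longrightarrow> I (Inl v) = i v" "\<And>k. k \<in> lianas \<pi> \<Longrightarrow> P (2 * k) = p k"
    and v: "v \<in> nodes \<pi>"
  shows "node_field f (graft \<pi> \<pi>' g) P I (Inl v) = node_field f \<pi> p i v"
proof -
  have "deco \<pi> v \<noteq> 0 \<Longrightarrow> deco \<pi> v \<in> lianas \<pi>"
    using v by (simp add: lianas_def)
  then show ?thesis
    by (simp add: node_field_def assms)
qed

lemma node_field_graft_Inr:
  assumes "\<And>w. w \<in> nodes \<pi>' \<Longrightarrow> I (Inr w) = i' w" "\<And>k. k \<in> lianas \<pi>' \<Longrightarrow> P (2 * k + 1) = p' k"
    and w: "w \<in> nodes \<pi>'"
  shows "node_field f (graft \<pi> \<pi>' g) P I (Inr w) = node_field f \<pi>' p' i' w"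
proof -
  have "deco \<pi>' w \<noteq> 0 \<Longrightarrow> deco \<pi>' w \<in> lianas \<pi>'"
    using w by (simp add: lianas_def)
  then show ?thesis
    using assms(2)[simplified] by (simp add: node_field_def assms(1) w)
qed

lemma graft_term_split:
  assumes N: "finite (nodes \<pi>)" and N': "finite (nodes \<pi>')"
    and I: "\<And>v. v \<in> nodes \<pi> \<Longrightarrow> I (Inl v) = i v" and I': "\<And>w. w \<in> nodes \<pi>' \<Longrightarrow> I (Inr w) = i' w"
    and P: "\<And>k. k \<in> lianas \<pi> \<Longrightarrow> P (2 * k) = p k" and P': "\<And>k. k \<in> lianas \<pi>' \<Longrightarrow> P (2 * k + 1) = p' k"
  shows "pdm \<phi> (dirs I (roots (graft \<pi> \<pi>' g))) x * node_factor f (graft \<pi> \<pi>' g) P I x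
    = grafted_term f \<pi>' \<phi> (roots \<pi>) i i' p' g x * node_factor f \<pi> p i x"
proof -
  have "pdm \<phi> (dirs I (roots (graft \<pi> \<pi>' g))) x = pdm \<phi> (dirs i {r \<in> roots \<pi>. g r = None} + dirs i' (roots \<pi>')) x"
    using dirs_roots_graft[where I = I, OF N N' I I'] by simp
  moreover have "node_factor f (graft \<pi> \<pi>' g) P I x = node_factor f \<pi> p i x *
      (\<Prod>w\<in>nodes \<pi>'. pdm (node_field f \<pi>' p' i' w) (dirs i {r \<in> roots \<pi>. g r = Some w} + dirs i' (preds \<pi>' w)) x)"
    unfolding node_factor_def nodes_graft prod.Plus[OF N N']
    using node_field_graft_Inl[where I = I and P = P, OF I P] node_field_graft_Inr[where I = I and P = P, OF I' P']
      dirs_preds_graft_Inl[where I = I, OF I] dirs_preds_graft_Inr[where I = I, OF N N' I I']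
    by (simp cong: prod.cong)
  ultimately show ?thesis
    unfolding grafted_term_def by (simp add: ac_simps)
qed

text \<open>The assignments of the grafted forest are glued from those of \<pi> and \<pi>' along
  Inl/Inr and along the even/odd relabelling of lianas made by graft.\<close>
lemma Fexo_graft:
  fixes f :: "nat \<Rightarrow> real^'d::finite \<Rightarrow> real^'d" and \<pi> :: "'a forest" and \<pi>' :: "'b forest"
  assumes N: "finite (nodes \<pi>)" and N': "finite (nodes \<pi>')"
  shows "Fexo f m (graft \<pi> \<pi>' g) \<phi> x =
    (\<Sum>i\<in>nodes \<pi> \<rightarrow>\<^sub>E UNIV. \<Sum>p\<in>lianas \<pi> \<rightarrow>\<^sub>E {1..m}. \<Sum>i'\<in>nodes \<pi>' \<rightarrow>\<^sub>E UNIV. \<Sum>p'\<in>lianas \<pi>' \<rightarrow>\<^sub>E {1..m}.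
       grafted_term f \<pi>' \<phi> (roots \<pi>) i i' p' g x * node_factor f \<pi> p i x)"
proof -
  have nodes_split: "inj_on Inl (nodes \<pi>)" "inj_on Inr (nodes \<pi>')" "Inl ` nodes \<pi> \<inter> Inr ` nodes \<pi>' = {}"
    by (auto simp: inj_on_def)
  have lianas_split: "inj_on (\<lambda>k. 2 * k) (lianas \<pi>)" "inj_on (\<lambda>k. 2 * k + 1) (lianas \<pi>')"
    "(\<lambda>k. 2 * k) ` lianas \<pi> \<inter> (\<lambda>k. 2 * k + 1) ` lianas \<pi>' = {}"
    by (auto simp: inj_on_def) presburger
  have "Fexo f m (graft \<pi> \<pi>' g) \<phi> x =
    (\<Sum>i\<in>nodes \<pi> \<rightarrow>\<^sub>E UNIV. \<Sum>i'\<in>nodes \<pi>' \<rightarrow>\<^sub>E UNIV. \<Sum>p\<in>lianas \<pi> \<rightarrow>\<^sub>E {1..m}. \<Sum>p'\<in>lianas \<pi>' \<rightarrow>\<^sub>E {1..m}.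
       grafted_term f \<pi>' \<phi> (roots \<pi>) i i' p' g x * node_factor f \<pi> p i x)"
    unfolding Fexo_eq_node_factor nodes_graft Plus_def lianas_graft
    by (simp only: sum_PiE_glue[OF nodes_split] sum_PiE_glue[OF lianas_split]
        graft_term_split[OF N N' glue_left glue_right glue_left glue_right] nodes_split lianas_split)
  then show ?thesis
    by (simp add: sum.swap[of _ "nodes \<pi>' \<rightarrow>\<^sub>E UNIV"])
qed

theorem mainTheorem5:
  fixes f :: "nat \<Rightarrow> real^'d::finite \<Rightarrow> real^'d"
    and m :: nat
    and \<pi> :: "'a forest" and \<pi>' :: "'b forest"
    and \<phi> :: "real^'d \<Rightarrow> real"
  assumes "m \<ge> 1"
    and "\<forall>p \<le> m. \<forall>i. smooth (\<lambda>x. f p x $ i)"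
    and "exotic_forest \<pi>" and "exotic_forest \<pi>'"
    and "smooth_poly \<phi>"
  shows "Fexo f m \<pi> (Fexo f m \<pi>' \<phi>) =
         (\<lambda>x. \<Sum>g \<in> GL_maps \<pi> \<pi>'. Fexo f m (graft \<pi> \<pi>' g) \<phi> x)"
proof
  fix x
  have \<phi>: "smooth \<phi>"
    using assms(5) unfolding smooth_poly_def by blast
  have N: "finite (nodes \<pi>)" and N': "finite (nodes \<pi>')"
    using assms(3,4) unfolding exotic_forest_def forest_def by blast+
  have "Fexo f m \<pi> (Fexo f m \<pi>' \<phi>) x =
    (\<Sum>i\<in>nodes \<pi> \<rightarrow>\<^sub>E UNIV. \<Sum>p\<in>lianas \<pi> \<rightarrow>\<^sub>E {1..m}. \<Sum>i'\<in>nodes \<pi>' \<rightarrow>\<^sub>E UNIV. \<Sum>p'\<in>lianas \<pi>' \<rightarrow>\<^sub>E {1..m}.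
       \<Sum>g\<in>GL_maps \<pi> \<pi>'. grafted_term f \<pi>' \<phi> (roots \<pi>) i i' p' g x * node_factor f \<pi> p i x)"
    unfolding Fexo_eq_node_factor[of f m \<pi>] pdm_Fexo[OF assms(2) \<phi> N' finite_roots[OF N]] GL_maps_def
    by (simp add: sum_distrib_right)
  also have "\<dots> = (\<Sum>g\<in>GL_maps \<pi> \<pi>'. Fexo f m (graft \<pi> \<pi>' g) \<phi> x)"
    by (simp add: Fexo_graft N N' sum.swap[of _ "GL_maps \<pi> \<pi>'"])
  finally show "Fexo f m \<pi> (Fexo f m \<pi>' \<phi>) x = (\<Sum>g\<in>GL_maps \<pi> \<pi>'. Fexo f m (graft \<pi> \<pi>' g) \<phi> x)" .
qed

end
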